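(* For all integers $m\ge1$, $r\ge0$ and $n\ge1$, $$\mathcal D_{m,r}(n,x)=(-1)^n\det M_n,$$ where $M_n$ is the $(n+1)\times(n+1)$ matrix with rows and columns indexed by $0,\dots,n$, whose row $0$ is $(1,x,x^2,\dots,x^n)$ and whose row $i$ for $1\le i\le n$ is $\big(w_{m,r}(0,i-1),w_{m,r}(1,i-1),\dots,w_{m,r}(n,i-1)\big)$; explicitly $$M_n=\begin{pmatrix}1&x&\cdots&x^{n-1}&x^n\\ 1&w_{m,r}(1,0)&\cdots&w_{m,r}(n-1,0)&w_{m,r}(n,0)\\ 0&1&\cdots&w_{m,r}(n-1,1)&w_{m,r}(n,1)\\ \vdots&&\ddots&&\vdots\\ 0&0&\cdots&1&w_{m,r}(n,n-1)\end{pmatrix}.$$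
   Context: For integers $m\ge1$, $n,k,r\ge0$: the $r$-Whitney numbers of the first kind $w_{m,r}(n,k)$ are defined by $\sum_{n\ge k}w_{m,r}(n,k)\frac{z^n}{n!}=(1+mz)^{-r/m}\frac{\ln^k(1+mz)}{m^kk!}$ (so $w_{m,r}(n,n)=1$ and $w_{m,r}(n,k)=0$ for $k>n$); the $r$-Whitney numbers of the second kind $W_{m,r}(n,k)$ by $\sum_{n\ge k}W_{m,r}(n,k)\frac{z^n}{n!}=\frac{e^{rz}}{k!}\left(\frac{e^{mz}-1}{m}\right)^k$; and the $r$-Dowling polynomial is $\mathcal D_{m,r}(n,u):=\sum_{k=0}^nW_{m,r}(n,k)u^k$. *)

theory Defs
  imports "HOL-Computational_Algebra.Formal_Power_Series" "Jordan_Normal_Form.Determinant"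
begin

text \<open>Here fps_binomial a = (1+z)^a and fps_ln 1 = ln(1+z);
  composing with m z gives the series in m z.\<close>
definition whitney1 :: "nat \<Rightarrow> nat \<Rightarrow> nat \<Rightarrow> nat \<Rightarrow> real" where
  "whitney1 m r n k =
     fact n * fps_nth ((fps_binomial (- (real r / real m)) oo (fps_const (real m) * fps_X))
               * ((fps_ln 1 oo (fps_const (real m) * fps_X)) ^ k)
               * fps_const (1 / (real m ^ k * fact k))) n"

definition whitney2 :: "nat \<Rightarrow> nat \<Rightarrow> nat \<Rightarrow> nat \<Rightarrow> real" where
  "whitney2 m r n k =
     fact n * fps_nth (fps_exp (real r) * fps_const (1 / fact k)
               * (fps_const (1 / real m) * (fps_exp (real m) - 1)) ^ k) n"

definition dowling :: "nat \<Rightarrow> nat \<Rightarrow> nat \<Rightarrow> real \<Rightarrow> real" where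
  "dowling m r n u = (\<Sum>k=0..n. whitney2 m r n k * u ^ k)"

end

theory Submission
  imports Defs
begin

text \<open>Let \<open>U = (exp(m z) - 1)/m\<close> and let \<open>F\<^sub>k\<close> be the exponential generating function
  of \<open>w(\<cdot>, k)\<close>. Since \<open>1 + m U = exp(m z)\<close>, substituting \<open>U\<close> into \<open>F\<^sub>k\<close> gives
  \<open>exp(-r z) z\<^sup>k / k!\<close>; comparing coefficients, the lower unitriangular matrix \<open>(W(k, j))\<close> is
  the inverse of \<open>(w(j, i))\<close>. Hence multiplying \<open>M\<^sub>n\<close> on the right by the unitriangular matrix
  \<open>(W(k, j))\<^sub>j\<^sub>,\<^sub>k\<close> leaves the determinant unchanged, turns row 0 into
  \<open>(D(k, x))\<^sub>k\<close> and row \<open>i \<ge> 1\<close> into the unit vector \<open>e\<^sub>i\<^sub>-\<^sub>1\<close>; expanding along the last column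
  gives \<open>(-1)\<^sup>n D(n, x)\<close>.\<close>

lemma fps_const_mult_X_compose:
  fixes c :: "'a::idom" and g :: "'a fps"
  assumes "fps_nth g 0 = 0"
  shows "(fps_const c * fps_X) oo g = fps_const c * g"
  using assms by (simp add: fps_compose_mult_distrib)

lemma fps_ln_compose_exp_minus_one:
  fixes c :: real
  assumes "c \<noteq> 0"
  shows "fps_ln 1 oo (fps_exp c - 1) = fps_const c * fps_X"
proof -
  have scale: "fps_exp c - 1 = (fps_exp 1 - 1) oo (fps_const c * fps_X)"
    by (simp add: fps_compose_sub_distrib)
  have "fps_ln (1::real) oo (fps_exp 1 - 1) = fps_X"
    by (simp add: fps_ln_fps_exp_inv fps_inv_fps_exp_compose)
  then show ?thesis
    unfolding scale by (subst fps_compose_assoc) auto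
qed

text \<open>Both sides solve \<open>y' = c d y\<close>: composing \<open>(1 + z) B' = c B\<close> with \<open>v = exp(d z) - 1\<close>
  turns the factor \<open>1 + v\<close> into \<open>exp(d z) = v' / d\<close>.\<close>
lemma fps_binomial_compose_exp_minus_one:
  fixes c d :: real
  shows "fps_binomial c oo (fps_exp d - 1) = fps_exp (c * d)"
proof -
  define B where "B = (fps_binomial c :: real fps)"
  define v where "v = (fps_exp d - 1 :: real fps)"
  have v0: "fps_nth v 0 = 0"
    by (simp add: v_def)
  have "fps_deriv B = fps_const c * B / (1 + fps_X)"
    unfolding B_def by (subst fps_binomial_ODE_unique) simp
  moreover have "(1 + fps_X) * inverse (1 + fps_X :: real fps) = 1"
    by (simp add: inverse_mult_eq_1')
  ultimately have "(1 + fps_X) * fps_deriv B = fps_const c * B"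
    by (simp add: fps_divide_unit)
  then have "((1 + fps_X) oo v) * (fps_deriv B oo v) = fps_const c * (B oo v)"
    by (metis fps_compose_mult_distrib v0 fps_const_compose)
  then have ode: "fps_exp d * (fps_deriv B oo v) = fps_const c * (B oo v)"
    using v0 by (simp add: fps_compose_add_distrib v_def)
  have "fps_deriv (B oo v) = (fps_deriv B oo v) * (fps_const d * fps_exp d)"
    using v0 by (simp add: fps_compose_deriv v_def)
  also have "\<dots> = fps_const (c * d) * (B oo v)"
    using ode by (simp add: algebra_simps flip: fps_const_mult)
  finally have "B oo v = fps_const (fps_nth (B oo v) 0) * fps_exp (c * d)"
    using fps_exp_unique_ODE by blast
  then show ?thesis
    by (simp add: B_def v_def)
qed

lemma fps_compose_nth_upto:
  fixes f g :: "'a::comm_ring_1 fps"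
  assumes "fps_nth g 0 = 0" and "p \<le> N"
  shows "fps_nth (f oo g) p = (\<Sum>j=0..N. fps_nth f j * fps_nth (g ^ j) p)"
proof -
  have "(\<Sum>j=0..N. fps_nth f j * fps_nth (g ^ j) p) = (\<Sum>j=0..p. fps_nth f j * fps_nth (g ^ j) p)"
    using assms startsby_zero_power_prefix[OF assms(1)]
    by (intro sum.mono_neutral_right) auto
  then show ?thesis
    by (simp add: fps_compose_nth)
qed

definition scaled_exp_minus_one :: "nat \<Rightarrow> real fps" where
  "scaled_exp_minus_one m = fps_const (1 / real m) * (fps_exp (real m) - 1)"

definition whitney1_egf :: "nat \<Rightarrow> nat \<Rightarrow> nat \<Rightarrow> real fps" where
  "whitney1_egf m r k =
     (fps_binomial (- (real r / real m)) oo (fps_const (real m) * fps_X))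
       * ((fps_ln 1 oo (fps_const (real m) * fps_X)) ^ k)
       * fps_const (1 / (real m ^ k * fact k))"

lemma scaled_exp_minus_one_nth_0 [simp]: "fps_nth (scaled_exp_minus_one m) 0 = 0"
  by (simp add: scaled_exp_minus_one_def)

lemma whitney1_eq_egf_nth: "whitney1 m r n k = fact n * fps_nth (whitney1_egf m r k) n"
  by (simp add: whitney1_def whitney1_egf_def)

lemma whitney2_eq_fps_nth:
  "whitney2 m r n k = fact n / fact k * fps_nth (fps_exp (real r) * scaled_exp_minus_one m ^ k) n"
proof -
  have reorder: "fps_exp (real r) * fps_const (1 / fact k) * scaled_exp_minus_one m ^ k
      = fps_const (1 / fact k) * (fps_exp (real r) * scaled_exp_minus_one m ^ k)"
    by (simp add: algebra_simps)
  show ?thesis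
    unfolding whitney2_def scaled_exp_minus_one_def[symmetric] reorder by simp
qed

lemma whitney1_egf_compose_scaled_exp_minus_one:
  assumes "m \<noteq> 0"
  shows "fps_exp (real r) * (whitney1_egf m r k oo scaled_exp_minus_one m)
       = fps_const (1 / fact k) * fps_X ^ k"
proof -
  let ?U = "scaled_exp_minus_one m"
  have "real m * (1 / real m) = 1"
    using assms by simp
  then have "fps_const (real m) * fps_const (1 / real m) = (1::real fps)"
    by (simp only: fps_const_mult fps_const_1_eq_1)
  then have inner: "(fps_const (real m) * fps_X) oo ?U = fps_exp (real m) - 1"
    by (simp add: fps_const_mult_X_compose scaled_exp_minus_one_def flip: mult.assoc)
  have binomial: "(fps_binomial (- (real r / real m)) oo (fps_const (real m) * fps_X)) oo ?U
      = fps_exp (- real r)"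
    using assms by (simp add: inner fps_binomial_compose_exp_minus_one flip: fps_compose_assoc)
  have ln: "(fps_ln 1 oo (fps_const (real m) * fps_X)) oo ?U = fps_const (real m) * fps_X"
    using assms by (simp add: inner fps_ln_compose_exp_minus_one flip: fps_compose_assoc)
  have "whitney1_egf m r k oo ?U = fps_exp (- real r) * (fps_const (real m) * fps_X) ^ k
        * fps_const (1 / (real m ^ k * fact k))"
    unfolding whitney1_egf_def fps_compose_mult_distrib[OF scaled_exp_minus_one_nth_0]
      fps_const_compose fps_compose_power[OF scaled_exp_minus_one_nth_0, symmetric] binomial ln ..
  also have "\<dots> = fps_exp (- real r) * (fps_const (1 / fact k) * fps_X ^ k)"
  proof -
    have "real m ^ k * (1 / (fact k * real m ^ k)) = 1 / fact k"
      using assms by simp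
    then show ?thesis
      by (simp add: power_mult_distrib fps_const_power algebra_simps)
  qed
  finally show ?thesis
    by (simp flip: mult.assoc fps_exp_add_mult)
qed

lemma whitney2_whitney1_inverse:
  assumes "m \<noteq> 0" and "k \<le> N"
  shows "(\<Sum>j=0..N. whitney2 m r k j * whitney1 m r j i) = (if k = i then 1 else 0)"
proof -
  let ?E = "fps_exp (real r)" and ?U = "scaled_exp_minus_one m" and ?F = "whitney1_egf m r i"
  have "(\<Sum>j=0..N. whitney2 m r k j * whitney1 m r j i)
      = fact k * (\<Sum>j=0..N. fps_nth ?F j * fps_nth (?E * ?U ^ j) k)"
    by (simp add: whitney2_eq_fps_nth whitney1_eq_egf_nth sum_distrib_left mult_ac)
  also have "(\<Sum>j=0..N. fps_nth ?F j * fps_nth (?E * ?U ^ j) k)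
      = (\<Sum>q=0..k. fps_nth ?E q * (\<Sum>j=0..N. fps_nth ?F j * fps_nth (?U ^ j) (k - q)))"
    by (simp add: fps_mult_nth sum_distrib_left mult_ac sum.swap[of _ "{0..N}"])
  also have "\<dots> = fps_nth (?E * (?F oo ?U)) k"
    unfolding fps_mult_nth using assms(2) by (intro sum.cong refl) (simp flip: fps_compose_nth_upto)
  also have "\<dots> = (if k = i then 1 / fact i else 0)"
    using assms(1) by (simp add: whitney1_egf_compose_scaled_exp_minus_one)
  finally show ?thesis
    by simp
qed

lemma whitney2_eq_0_above_diag: "n < k \<Longrightarrow> whitney2 m r n k = 0"
  using startsby_zero_power_prefix[OF scaled_exp_minus_one_nth_0]
  by (simp add: whitney2_eq_fps_nth fps_mult_nth)

lemma whitney2_diag: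
  assumes "m \<noteq> 0"
  shows "whitney2 m r k k = 1"
proof -
  let ?U = "scaled_exp_minus_one m"
  have "fps_nth (fps_exp (real r) * ?U ^ k) k = (\<Sum>q=0..k. fps_nth (fps_exp (real r)) q * fps_nth (?U ^ k) (k - q))"
    by (simp add: fps_mult_nth)
  also have "\<dots> = fps_nth (fps_exp (real r)) 0 * fps_nth (?U ^ k) k"
    using startsby_zero_power_prefix[OF scaled_exp_minus_one_nth_0, of k]
    by (subst sum.remove[of _ 0]) auto
  also have "\<dots> = 1"
  proof -
    have "fps_nth ?U 1 = 1"
      using assms by (simp add: scaled_exp_minus_one_def)
    then show ?thesis
      by (simp add: startsby_zero_power_nth_same)
  qed
  finally show ?thesis
    by (simp add: whitney2_eq_fps_nth)
qed

lemma dowling_eq_sum_upto: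
  assumes "n \<le> N"
  shows "dowling m r n x = (\<Sum>k=0..N. whitney2 m r n k * x ^ k)"
  unfolding dowling_def using assms whitney2_eq_0_above_diag
  by (intro sum.mono_neutral_left) auto

lemma det_upper_unitriangular:
  fixes A :: "'a::comm_ring_1 mat"
  assumes "A \<in> carrier_mat n n"
    and "\<And>i j. i < n \<Longrightarrow> j < i \<Longrightarrow> A $$ (i, j) = 0"
    and "\<And>i. i < n \<Longrightarrow> A $$ (i, i) = 1"
  shows "det A = 1"
proof -
  have "upper_triangular A"
    using assms(1,2) by (auto simp: upper_triangular_def)
  then have "det A = prod_list (diag_mat A)"
    using det_upper_triangular assms(1) by blast
  also have "diag_mat A = replicate n 1"
    using assms(1,3) by (auto simp: diag_mat_def intro: nth_equalityI)
  finally show ?thesis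
    by simp
qed

lemma det_first_row_then_shifted_identity:
  fixes a :: "nat \<Rightarrow> 'a::comm_ring_1"
  shows "det (mat (n+1) (n+1) (\<lambda>(i, k). if i = 0 then a k else if k = i - 1 then 1 else 0))
       = (-1) ^ n * a n"
  (is "det ?P = _")
proof -
  have P: "?P \<in> carrier_mat (n+1) (n+1)"
    by simp
  have "det ?P = (\<Sum>i<n+1. ?P $$ (i, n) * cofactor ?P i n)"
    using laplace_expansion_column[OF P] by simp
  also have "\<dots> = ?P $$ (0, n) * cofactor ?P 0 n"
    by (subst sum.mono_neutral_right[where S="{0}"]) auto
  also have "mat_delete ?P 0 n = 1\<^sub>m n"
    by (rule eq_matI) (auto simp: mat_delete_def)
  then have "?P $$ (0, n) * cofactor ?P 0 n = (-1) ^ n * a n"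
    by (simp add: cofactor_def)
  finally show ?thesis .
qed

lemma whitney1_matrix_mult_whitney2:
  assumes "m \<noteq> 0"
  shows "mat (n+1) (n+1) (\<lambda>(i, j). if i = 0 then x ^ j else whitney1 m r j (i - 1))
       * mat (n+1) (n+1) (\<lambda>(j, k). whitney2 m r k j)
     = mat (n+1) (n+1) (\<lambda>(i, k). if i = 0 then dowling m r k x else if k = i - 1 then 1 else 0)"
  (is "?M * ?C = ?P")
proof (rule eq_matI)
  fix i k
  assume "i < dim_row ?P" and "k < dim_col ?P"
  then have i: "i \<le> n" and k: "k \<le> n"
    by auto
  show "(?M * ?C) $$ (i, k) = ?P $$ (i, k)"
    using i k whitney2_whitney1_inverse[OF assms k, where i="i - 1"] dowling_eq_sum_upto[OF k, of m r x]
    by (auto simp: scalar_prod_def atLeastLessThanSuc_atLeastAtMost mult.commute intro: sum.cong)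
qed auto

theorem mainTheorem20:
  fixes m r n :: nat and x :: real
  assumes "m \<ge> 1" and "n \<ge> 1"
  shows "dowling m r n x =
    (-1) ^ n * det (mat (n+1) (n+1)
       (\<lambda>(i,j). if i = 0 then x ^ j else whitney1 m r j (i - 1)))"
proof -
  have m: "m \<noteq> 0"
    using assms(1) by simp
  define M where "M = mat (n+1) (n+1) (\<lambda>(i,j). if i = 0 then x ^ j else whitney1 m r j (i - 1))"
  define C where "C = mat (n+1) (n+1) (\<lambda>(j, k). whitney2 m r k j)"
  have "det C = 1"
    unfolding C_def using whitney2_eq_0_above_diag whitney2_diag[OF m]
    by (intro det_upper_unitriangular) auto
  then have "det M = det (M * C)"
    by (simp add: M_def C_def det_mult[of _ "n+1"])
  also have "\<dots> = (-1) ^ n * dowling m r n x"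
    unfolding M_def C_def whitney1_matrix_mult_whitney2[OF m] det_first_row_then_shifted_identity ..
  finally show ?thesis
    unfolding M_def by (simp flip: mult.assoc power_mult_distrib)
qed

end
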